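(* Let $P\subseteq\mathbb{R}^n$ be an $n$-dimensional rational polytope with irredundant description $P=\{x:\langle a_i,x\rangle\ge b_i,\ i=1,\dots,m\}$, and let $l$ be the common denominator of $b_1,\dots,b_m$. Then $\mathrm{int}(lP)\cap\mathbb{Z}^n=(lP)^{(1)}\cap\mathbb{Z}^n$. In particular, $\mu(P)\le l\,\mathrm{cd}(P)$.
   Context: In the irredundant description, $a_i\in(\mathbb{Z}^n)^*$ are primitive, $b_i\in\mathbb{Q}$, and each inequality defines a facet. For an $n$-dimensional rational polytope $Q$ with such a description, $d_Q(x):=\min_i(\langle a_i,x\rangle-b_i)$ and $Q^{(s)}:=\{x:d_Q(x)\ge s\}$; note $lP$ has description $\langle a_i,x\rangle\ge lb_i$. $\mu(P):=(\sup\{s>0:P^{(s)}\neq\emptyset\})^{-1}$ is the $\mathbb{Q}$-codegree, and the codegree is $\mathrm{cd}(P):=\min\{k\in\mathbb{Z}_{\ge1}:\mathrm{int}(kP)\cap\mathbb{Z}^n\neq\emptyset\}$. The common denominator of $b_1,\dots,b_m$ is the least positive integer $l$ with $lb_i\in\mathbb{Z}$ for all $i$. *)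

theory Defs
  imports "HOL-Analysis.Analysis"
begin

definition int_points :: "(real^'n) set" where
  "int_points = {x. \<forall>j. x $ j \<in> \<int>}"

definition primitive_int_vec :: "real^'n \<Rightarrow> bool" where
  "primitive_int_vec a \<longleftrightarrow> (\<forall>j. a $ j \<in> \<int>) \<and> a \<noteq> 0 \<and>
     (\<forall>d::int. d > 0 \<longrightarrow> (\<forall>j. a $ j / of_int d \<in> \<int>) \<longrightarrow> d = 1)"

definition desc_set :: "nat \<Rightarrow> (nat \<Rightarrow> real^'n) \<Rightarrow> (nat \<Rightarrow> real) \<Rightarrow> (real^'n) set" where
  "desc_set m a b = {x. \<forall>i<m. a i \<bullet> x \<ge> b i}"

text \<open>Irredundant description of an n-dimensional rational polytope: primitive integer
  normals, rational right-hand sides, each inequality defines a facet, no repetitions.\<close>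
definition irredundant_desc :: "(real^'n) set \<Rightarrow> nat \<Rightarrow> (nat \<Rightarrow> real^'n) \<Rightarrow> (nat \<Rightarrow> real) \<Rightarrow> bool" where
  "irredundant_desc P m a b \<longleftrightarrow>
     P = desc_set m a b \<and>
     (\<forall>i<m. primitive_int_vec (a i) \<and> b i \<in> \<rat>) \<and>
     (\<forall>i<m. aff_dim (P \<inter> {x. a i \<bullet> x = b i}) = int CARD('n) - 1) \<and>
     inj_on (\<lambda>i. (a i, b i)) {..<m}"

definition dist_fun :: "nat \<Rightarrow> (nat \<Rightarrow> real^'n) \<Rightarrow> (nat \<Rightarrow> real) \<Rightarrow> real^'n \<Rightarrow> real" where
  "dist_fun m a b x = Min ((\<lambda>i. a i \<bullet> x - b i) ` {..<m})"

definition inner_par :: "nat \<Rightarrow> (nat \<Rightarrow> real^'n) \<Rightarrow> (nat \<Rightarrow> real) \<Rightarrow> real \<Rightarrow> (real^'n) set" where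
  "inner_par m a b s = {x. dist_fun m a b x \<ge> s}"

definition Q_codegree :: "nat \<Rightarrow> (nat \<Rightarrow> real^'n) \<Rightarrow> (nat \<Rightarrow> real) \<Rightarrow> real" where
  "Q_codegree m a b = inverse (Sup {s. s > 0 \<and> inner_par m a b s \<noteq> {}})"

definition codegree :: "(real^'n) set \<Rightarrow> nat" where
  "codegree P = (LEAST k::nat. k \<ge> 1 \<and> interior ((\<lambda>x. real k *\<^sub>R x) ` P) \<inter> int_points \<noteq> {})"

definition common_denom :: "nat \<Rightarrow> (nat \<Rightarrow> real) \<Rightarrow> nat" where
  "common_denom m b = (LEAST l::nat. l > 0 \<and> (\<forall>i<m. real l * b i \<in> \<int>))"

end

theory Submission
  imports Defs
begin

(* For a lattice point x the numbers <a_i, x> - l b_i are integers, so they are positive exactly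
   when they are at least 1: this is the first claim.  For the second, take k = cd(P) and an
   interior lattice point x of kP.  Then <a_i, x> - k b_i > 0 lies in (1/l) Z, hence is at least
   1/l, so x/k lies in P^(1/(lk)) and the supremum defining 1/mu(P) is at least 1/(lk).  That
   supremum is finite because P^(s) contains the centre of a ball of radius s / max |a_i| inside
   the bounded set P. *)

lemma Ints_less_iff_add_one_le:
  fixes w z :: "'a::linordered_idom"
  assumes "w \<in> \<int>" "z \<in> \<int>"
  shows "w < z \<longleftrightarrow> w + 1 \<le> z"
proof
  assume "w < z"
  moreover have "z - w \<in> \<int>" using assms by simp
  ultimately have "1 \<le> \<bar>z - w\<bar>" by (intro Ints_nonzero_abs_ge1) auto
  with \<open>w < z\<close> show "w + 1 \<le> z" by simp
qed simp

lemma inner_int_points_Ints: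
  assumes "\<forall>j. a $ j \<in> \<int>" "x \<in> int_points"
  shows "a \<bullet> x \<in> \<int>"
  using assms unfolding inner_vec_def int_points_def by (auto intro!: Ints_sum Ints_mult)

lemma interior_finite_INT:
  assumes "finite I"
  shows "interior (\<Inter>i\<in>I. S i) = (\<Inter>i\<in>I. interior (S i))"
  using assms by induction auto

lemma interior_desc_set:
  assumes "\<forall>i<m. a i \<noteq> 0"
  shows "interior (desc_set m a b) = {x. \<forall>i<m. b i < a i \<bullet> x}"
proof -
  have "desc_set m a b = (\<Inter>i\<in>{..<m}. {x. a i \<bullet> x \<ge> b i})"
    by (auto simp: desc_set_def)
  then show ?thesis
    using assms by (auto simp: interior_finite_INT)
qed

lemma scaleR_image_desc_set:
  assumes "c > 0"
  shows "(\<lambda>x. c *\<^sub>R x) ` desc_set m a b = desc_set m a (\<lambda>i. c * b i)"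
proof
  show "(\<lambda>x. c *\<^sub>R x) ` desc_set m a b \<subseteq> desc_set m a (\<lambda>i. c * b i)"
    using assms by (auto simp: desc_set_def)
  show "desc_set m a (\<lambda>i. c * b i) \<subseteq> (\<lambda>x. c *\<^sub>R x) ` desc_set m a b"
  proof
    fix x assume "x \<in> desc_set m a (\<lambda>i. c * b i)"
    then have "inverse c *\<^sub>R x \<in> desc_set m a b"
      using assms by (auto simp: desc_set_def field_simps)
    moreover have "x = c *\<^sub>R (inverse c *\<^sub>R x)" using assms by simp
    ultimately show "x \<in> (\<lambda>x. c *\<^sub>R x) ` desc_set m a b" by blast
  qed
qed

lemma interior_scaleR_image:
  fixes S :: "'a::euclidean_space set"
  assumes "c \<noteq> 0"
  shows "interior ((\<lambda>x. c *\<^sub>R x) ` S) = (\<lambda>x. c *\<^sub>R x) ` interior S"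
  using assms by (simp add: interior_injective_linear_image inj_on_def)

lemma interior_scaleR_desc_set:
  assumes "c > 0" "\<forall>i<m. a i \<noteq> 0"
  shows "interior ((\<lambda>x. c *\<^sub>R x) ` desc_set m a b) = {x. \<forall>i<m. c * b i < a i \<bullet> x}"
  using assms by (simp add: scaleR_image_desc_set interior_desc_set)

lemma mem_inner_par_iff:
  assumes "m > 0"
  shows "x \<in> inner_par m a b s \<longleftrightarrow> (\<forall>i<m. s \<le> a i \<bullet> x - b i)"
proof -
  have "{..<m} \<noteq> {}" using assms by auto
  then show ?thesis by (auto simp: inner_par_def dist_fun_def Min_ge_iff)
qed

lemma common_denom_spec:
  assumes "\<forall>i<m. b i \<in> \<rat>"
  shows "common_denom m b > 0 \<and> (\<forall>i<m. real (common_denom m b) * b i \<in> \<int>)"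
proof -
  have "\<exists>q::nat. q > 0 \<and> real q * b i \<in> \<int>" if "i < m" for i
  proof -
    have "b i \<in> \<rat>" using assms \<open>i < m\<close> by blast
    then obtain p q :: int where "q > 0" "b i = of_int p / of_int q"
      by (blast elim: Rats_cases')
    then show ?thesis by (intro exI[of _ "nat q"]) auto
  qed
  then obtain q :: "nat \<Rightarrow> nat" where q: "\<And>i. i < m \<Longrightarrow> q i > 0 \<and> real (q i) * b i \<in> \<int>"
    by metis
  have "real (\<Prod>j<m. q j) * b i \<in> \<int>" if "i < m" for i
  proof -
    have "real (\<Prod>j<m. q j) * b i = real (\<Prod>j\<in>{..<m}-{i}. q j) * (real (q i) * b i)"
      using that by (simp add: prod.remove)
    also have "\<dots> \<in> \<int>" by (rule Ints_mult[OF Ints_of_nat conjunct2[OF q[OF that]]])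
    finally show ?thesis .
  qed
  moreover have "(\<Prod>j<m. q j) > 0" using q by (simp add: prod_pos)
  ultimately show ?thesis
    unfolding common_denom_def
    by (intro LeastI[where P = "\<lambda>l. l > 0 \<and> (\<forall>i<m. real l * b i \<in> \<int>)"] conjI allI impI)
qed

lemma int_point_close:
  fixes x :: "real^'n"
  obtains y where "y \<in> int_points" "dist x y \<le> real CARD('n) / 2"
proof
  define y :: "real^'n" where "y = (\<chi> j. of_int (round (x $ j)))"
  show "y \<in> int_points" by (simp add: y_def int_points_def)
  have "dist x y \<le> (\<Sum>j\<in>UNIV. \<bar>(y - x) $ j\<bar>)"
    by (metis dist_commute dist_norm norm_le_l1_cart)
  also have "\<dots> \<le> (\<Sum>j\<in>(UNIV::'n set). 1/2)"
    using of_int_round_abs_le by (intro sum_mono) (simp add: y_def)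
  finally show "dist x y \<le> real CARD('n) / 2" by simp
qed

lemma scaled_interior_meets_int_points:
  fixes S :: "(real^'n) set"
  assumes "interior S \<noteq> {}"
  obtains k :: nat where "k \<ge> 1" "interior ((\<lambda>x. real k *\<^sub>R x) ` S) \<inter> int_points \<noteq> {}"
proof -
  obtain p r where "r > 0" and ball: "ball p r \<subseteq> interior S"
    using assms open_contains_ball_eq by blast
  obtain k :: nat where k: "real CARD('n) / 2 / r < real k"
    using reals_Archimedean2 by blast
  moreover have "0 \<le> real CARD('n) / 2 / r" using \<open>r > 0\<close> by simp
  ultimately have "k \<ge> 1" by (cases k) auto
  obtain y where y: "y \<in> int_points" "dist (real k *\<^sub>R p) y \<le> real CARD('n) / 2"
    using int_point_close by blast
  have "dist (real k *\<^sub>R p) y < real k * r"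
    using y(2) k \<open>r > 0\<close> by (simp add: field_simps)
  moreover have "dist (real k *\<^sub>R p) y = real k * dist p (inverse (real k) *\<^sub>R y)"
  proof -
    have "real k *\<^sub>R p - y = real k *\<^sub>R (p - inverse (real k) *\<^sub>R y)"
      using \<open>k \<ge> 1\<close> by (simp add: algebra_simps)
    then show ?thesis by (simp add: dist_norm)
  qed
  ultimately have "dist p (inverse (real k) *\<^sub>R y) < r"
    using \<open>k \<ge> 1\<close> by simp
  then have "inverse (real k) *\<^sub>R y \<in> interior S" using ball by auto
  moreover have "y = real k *\<^sub>R (inverse (real k) *\<^sub>R y)" using \<open>k \<ge> 1\<close> by simp
  ultimately have "y \<in> (\<lambda>x. real k *\<^sub>R x) ` interior S" by (rule image_eqI[rotated])
  then have "y \<in> interior ((\<lambda>x. real k *\<^sub>R x) ` S)"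
    using \<open>k \<ge> 1\<close> by (simp add: interior_scaleR_image)
  with \<open>k \<ge> 1\<close> y(1) that show ?thesis by blast
qed

lemma codegree_spec:
  assumes "interior P \<noteq> {}"
  shows "codegree P \<ge> 1 \<and> interior ((\<lambda>x. real (codegree P) *\<^sub>R x) ` P) \<inter> int_points \<noteq> {}"
proof -
  obtain k :: nat where "k \<ge> 1" "interior ((\<lambda>x. real k *\<^sub>R x) ` P) \<inter> int_points \<noteq> {}"
    using scaled_interior_meets_int_points[OF assms] .
  then show ?thesis
    unfolding codegree_def by (intro LeastI conjI)
qed

lemma int_points_interior_scaleR_desc_set:
  assumes "m > 0" "c > 0" "\<forall>i<m. (\<forall>j. a i $ j \<in> \<int>) \<and> a i \<noteq> 0" "\<forall>i<m. c * b i \<in> \<int>"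
  shows "interior ((\<lambda>x. c *\<^sub>R x) ` desc_set m a b) \<inter> int_points
           = inner_par m a (\<lambda>i. c * b i) 1 \<inter> int_points"
proof -
  have "c * b i < a i \<bullet> x \<longleftrightarrow> 1 \<le> a i \<bullet> x - c * b i" if "i < m" "x \<in> int_points" for i x
    using Ints_less_iff_add_one_le[of "c * b i" "a i \<bullet> x"] inner_int_points_Ints[of "a i" x] assms that
    by auto
  then show ?thesis
    using assms by (auto simp: interior_scaleR_desc_set mem_inner_par_iff)
qed

lemma cball_subset_desc_set:
  assumes "m > 0" "w \<in> inner_par m a b s" "M > 0" "\<forall>i<m. norm (a i) \<le> M"
  shows "cball w (s / M) \<subseteq> desc_set m a b"
proof
  fix z assume z: "z \<in> cball w (s / M)"
  have "b i \<le> a i \<bullet> z" if "i < m" for i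
  proof -
    have "\<bar>a i \<bullet> (z - w)\<bar> \<le> norm (a i) * norm (z - w)" by (rule Cauchy_Schwarz_ineq2)
    also have "\<dots> \<le> M * (s / M)"
      using assms(3,4) that z by (intro mult_mono) (auto simp: dist_norm norm_minus_commute)
    also have "\<dots> = s" using \<open>M > 0\<close> by simp
    finally have "a i \<bullet> w - s \<le> a i \<bullet> z" by (simp add: inner_diff_right abs_le_iff)
    moreover have "s \<le> a i \<bullet> w - b i" using assms(1,2) that by (simp add: mem_inner_par_iff)
    ultimately show ?thesis by linarith
  qed
  then show "z \<in> desc_set m a b" by (simp add: desc_set_def)
qed

lemma bdd_above_inner_par_levels:
  assumes "m > 0" "bounded (desc_set m a b)"
  shows "bdd_above {s. s > 0 \<and> inner_par m a b s \<noteq> {}}"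
proof (rule bdd_aboveI)
  define M where "M = 1 + (\<Sum>i<m. norm (a i))"
  have "M > 0" by (simp add: M_def add_pos_nonneg sum_nonneg)
  have norm_le: "\<forall>i<m. norm (a i) \<le> M"
  proof (intro allI impI)
    fix i assume "i < m"
    then have "norm (a i) \<le> (\<Sum>i<m. norm (a i))" by (intro member_le_sum) auto
    then show "norm (a i) \<le> M" by (simp add: M_def)
  qed
  fix s assume "s \<in> {s. s > 0 \<and> inner_par m a b s \<noteq> {}}"
  then obtain w where "s > 0" "w \<in> inner_par m a b s" by blast
  then have "diameter (cball w (s / M)) \<le> diameter (desc_set m a b)"
    using cball_subset_desc_set[OF \<open>m > 0\<close> _ \<open>M > 0\<close> norm_le] assms(2)
    by (intro diameter_subset) auto
  then show "s \<le> M * diameter (desc_set m a b) / 2"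
    using \<open>s > 0\<close> \<open>M > 0\<close> by (simp add: field_simps)
qed

lemma Q_codegree_le_inverse:
  assumes "bdd_above {s. s > 0 \<and> inner_par m a b s \<noteq> {}}" "s > 0" "inner_par m a b s \<noteq> {}"
  shows "Q_codegree m a b \<le> 1 / s"
proof -
  have "s \<le> Sup {s. s > 0 \<and> inner_par m a b s \<noteq> {}}"
    using assms by (intro cSup_upper) auto
  then show ?thesis
    unfolding Q_codegree_def using \<open>s > 0\<close> le_imp_inverse_le by (simp add: inverse_eq_divide)
qed

lemma bounded_desc_set_imp_pos:
  assumes "bounded (desc_set m a b :: (real^'n) set)"
  shows "m > 0"
proof (rule ccontr)
  assume "\<not> m > 0"
  then have "desc_set m a b = (UNIV :: (real^'n) set)" by (simp add: desc_set_def)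
  with assms show False using not_bounded_UNIV by metis
qed

lemma inner_par_from_interior_int_point:
  assumes "m > 0" "k > 0" "l > 0" "\<forall>i<m. (\<forall>j. a i $ j \<in> \<int>) \<and> a i \<noteq> 0"
    and "\<forall>i<m. real l * b i \<in> \<int>"
    and "x \<in> int_points" "x \<in> interior ((\<lambda>x. real k *\<^sub>R x) ` desc_set m a b)"
  shows "inverse (real k) *\<^sub>R x \<in> inner_par m a b (1 / (real l * real k))"
proof -
  have strict: "\<forall>i<m. real k * b i < a i \<bullet> x"
    using assms(2,4,7) interior_scaleR_desc_set[of "real k" m a b] by auto
  have "1 / (real l * real k) \<le> a i \<bullet> (inverse (real k) *\<^sub>R x) - b i" if "i < m" for i
  proof -
    have "a i \<bullet> x \<in> \<int>" using assms(4,6) that by (simp add: inner_int_points_Ints)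
    then have "real k * (real l * b i) \<in> \<int>" "real l * (a i \<bullet> x) \<in> \<int>"
      using assms(5) that by auto
    moreover have "real k * (real l * b i) < real l * (a i \<bullet> x)"
      using assms(3) strict that by simp
    ultimately have "real k * (real l * b i) + 1 \<le> real l * (a i \<bullet> x)"
      by (simp add: Ints_less_iff_add_one_le)
    then show ?thesis
      using assms(2,3) by (simp add: field_simps)
  qed
  then show ?thesis using assms(1) by (simp add: mem_inner_par_iff)
qed

theorem lemma1p8:
  fixes P :: "(real^'n) set" and m :: nat and a :: "nat \<Rightarrow> real^'n" and b :: "nat \<Rightarrow> real"
  assumes "polytope P"
    and "interior P \<noteq> {}"
    and "irredundant_desc P m a b"
    and "l = common_denom m b"
  shows "interior ((\<lambda>x. real l *\<^sub>R x) ` P) \<inter> int_points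
           = inner_par m a (\<lambda>i. real l * b i) 1 \<inter> int_points
         \<and> Q_codegree m a b \<le> real l * real (codegree P)"
proof -
  have P: "P = desc_set m a b" and normals: "\<forall>i<m. (\<forall>j. a i $ j \<in> \<int>) \<and> a i \<noteq> 0"
    and "\<forall>i<m. b i \<in> \<rat>"
    using assms(3) by (auto simp: irredundant_desc_def primitive_int_vec_def)
  then have l: "l > 0" "\<forall>i<m. real l * b i \<in> \<int>"
    using common_denom_spec assms(4) by blast+
  have "bounded P" using assms(1) polytope_imp_bounded by blast
  then have "m > 0" using P bounded_desc_set_imp_pos by blast
  define k where "k = codegree P"
  obtain x where x: "x \<in> int_points" "x \<in> interior ((\<lambda>x. real k *\<^sub>R x) ` P)" and "k \<ge> 1"
    using codegree_spec[OF assms(2)] unfolding k_def by blast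
  then have "inverse (real k) *\<^sub>R x \<in> inner_par m a b (1 / (real l * real k))"
    using inner_par_from_interior_int_point[OF \<open>m > 0\<close> _ l(1) normals l(2) x(1)] P by simp
  then have "inner_par m a b (1 / (real l * real k)) \<noteq> {}" by blast
  moreover have "bdd_above {s. s > 0 \<and> inner_par m a b s \<noteq> {}}"
    using bdd_above_inner_par_levels \<open>m > 0\<close> \<open>bounded P\<close> P by simp
  moreover have "1 / (real l * real k) > 0" using l(1) \<open>k \<ge> 1\<close> by simp
  ultimately have "Q_codegree m a b \<le> real l * real k"
    using Q_codegree_le_inverse by fastforce
  moreover have "interior ((\<lambda>x. real l *\<^sub>R x) ` P) \<inter> int_points
           = inner_par m a (\<lambda>i. real l * b i) 1 \<inter> int_points"
    unfolding P using int_points_interior_scaleR_desc_set[OF \<open>m > 0\<close> _ normals l(2)] l(1) by simp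
  ultimately show ?thesis by (simp add: k_def)
qed

end
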